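(* Let $f:\mathrm{GF}(p^m)^n\to\mathrm{GF}(p^m)$ be a polynomial function and $I=\{i_1,\ldots,i_k\}\subseteq\{1,\ldots,n\}$. Write $t_I=x_{i_1}\cdots x_{i_k}$ and $f = t_I f_{S(I)} + r$ where every monomial of $r$ misses at least one variable $x_i$ with $i\in I$. Let $\mathbf{v}$ denote the $n$-tuple with $1$ in positions $i_1,\ldots,i_k$ and the indeterminates $x_j$ in the other positions, and $\mathbf{u}$ the $n$-tuple with $0$ in positions $i_1,\ldots,i_k$ and indeterminates elsewhere. Define \[ f_I = \sum_{(b_1,\ldots,b_k)\in\{0,1\}^k} (-1)^{k-(b_1+\cdots+b_k)} f|_{x_{i_1}=b_1,\ldots,x_{i_k}=b_k}, \] a function of the variables $x_j$, $j\notin I$. Then \[ f_I = (\Delta^{(k)}_{\mathbf{e}_{i_1},\ldots,\mathbf{e}_{i_k}} f)(\mathbf{u}) = f_{S(I)}(\mathbf{v}). \]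
   Context: Every function $\mathrm{GF}(q)^n\to\mathrm{GF}(q)$ is represented uniquely by a polynomial of degree at most $q-1$ in each variable; the decomposition $f=t_If_{S(I)}+r$ refers to this representative ($f_{S(I)}$ may involve the variables with index in $I$). $\mathbf e_i$ is the $i$-th standard basis vector, $(\Delta_{\mathbf{a}} f)(\mathbf{x}) = f(\mathbf{x}+\mathbf{a})-f(\mathbf{x})$, and $\Delta^{(k)}_{\mathbf{a}_1,\ldots,\mathbf{a}_k}=\Delta_{\mathbf{a}_1}\cdots\Delta_{\mathbf{a}_k}$. *)

theory Defs
  imports "HOL-Library.FuncSet"
begin

text \<open>Points of GF(q)^n are functions from a finite index type 'n to the field 'a.
  Exponent vectors are functions 'n => nat.\<close>

definition red_exps :: "nat \<Rightarrow> ('n::finite \<Rightarrow> nat) set" where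
  "red_exps q = {e. \<forall>i. e i \<le> q - 1}"

definition monom_eval :: "('n::finite \<Rightarrow> nat) \<Rightarrow> ('n \<Rightarrow> 'a::comm_ring_1) \<Rightarrow> 'a" where
  "monom_eval e x = (\<Prod>i\<in>UNIV. x i ^ e i)"

definition poly_fun :: "(('n::finite \<Rightarrow> nat) \<Rightarrow> 'a::{field,finite}) \<Rightarrow> ('n \<Rightarrow> 'a) \<Rightarrow> 'a" where
  "poly_fun c x = (\<Sum>e\<in>red_exps (card (UNIV :: 'a set)). c e * monom_eval e x)"

text \<open>The polynomial function of f_{S(I)}, where f = t_I f_{S(I)} + r and
  every monomial of r misses some x_i with i in I: collect the monomials divisible
  by t_I and divide them by t_I.\<close>
definition fSI :: "(('n::finite \<Rightarrow> nat) \<Rightarrow> 'a::{field,finite}) \<Rightarrow> 'n set \<Rightarrow> ('n \<Rightarrow> 'a) \<Rightarrow> 'a" where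
  "fSI c I y = (\<Sum>e\<in>{e\<in>red_exps (card (UNIV :: 'a set)). \<forall>i\<in>I. 1 \<le> e i}.
      c e * (\<Prod>i\<in>UNIV. y i ^ (if i \<in> I then e i - 1 else e i)))"

definition std_basis :: "'n \<Rightarrow> 'n \<Rightarrow> 'a::zero_neq_one" where
  "std_basis i = (\<lambda>j. if j = i then 1 else 0)"

definition fdelta :: "('n \<Rightarrow> 'a::ab_group_add) \<Rightarrow> (('n \<Rightarrow> 'a) \<Rightarrow> 'a) \<Rightarrow> ('n \<Rightarrow> 'a) \<Rightarrow> 'a" where
  "fdelta a f = (\<lambda>x. f (\<lambda>j. x j + a j) - f x)"

fun fdelta_iter :: "('n \<Rightarrow> 'a::ab_group_add) list \<Rightarrow> (('n \<Rightarrow> 'a) \<Rightarrow> 'a) \<Rightarrow> ('n \<Rightarrow> 'a) \<Rightarrow> 'a" where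
  "fdelta_iter [] f = f"
| "fdelta_iter (a # as) f = fdelta a (fdelta_iter as f)"

text \<open>f_I(x) = sum over (b_1..b_k) in {0,1}^k of (-1)^(k - sum b) f|_{x_{i_j} = b_j};
  the result depends only on the coordinates of x outside I.\<close>
definition f_I :: "(('n \<Rightarrow> 'a::comm_ring_1) \<Rightarrow> 'a) \<Rightarrow> 'n set \<Rightarrow> ('n \<Rightarrow> 'a) \<Rightarrow> 'a" where
  "f_I f I x = (\<Sum>b\<in>(I \<rightarrow>\<^sub>E {0::nat, 1}).
      (-1) ^ (card I - (\<Sum>i\<in>I. b i)) * f (\<lambda>j. if j \<in> I then of_nat (b j) else x j))"

end

theory Submission
  imports Defs
begin

text \<open>
  Fix a set I of coordinates and a point x. The vertices of the unit cube in the
  coordinates I (with the other coordinates frozen at x) are indexed by the subsets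
  S of I; the alternating vertex sum of a function f is
    \<Sum>S \<subseteq> I. (-1)^(|I| - |S|) f(vertex S).
  Both f_I and the iterated difference of f along e_i (i \<in> I), taken at the point u
  with zeros in the coordinates I, are this vertex sum: for f_I this is the
  reindexing {0,1}^I \<cong> Pow I, for the differences it follows by induction on the
  number of difference operators. The vertex sum is linear in f, and on a monomial
  x^e it factors into an alternating sum over I, which by expanding
  \<Prod>i\<in>I. (1 - 0^(e i)) equals 1 if every x_i with i \<in> I occurs in x^e and 0
  otherwise. Hence the vertex sum of a polynomial function keeps exactly the
  monomials divisible by t_I, with x_i (i \<in> I) set to 1; that is f_{S(I)}(v).
\<close>

lemma sum_Pow_insert:
  assumes "finite A" "a \<notin> A"
  shows "(\<Sum>S\<in>Pow (insert a A). g S) = (\<Sum>S\<in>Pow A. g S) + (\<Sum>S\<in>Pow A. g (insert a S))"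
proof -
  have "inj_on (insert a) (Pow A)" and "Pow A \<inter> insert a ` Pow A = {}"
    using assms(2) by (auto simp: inj_on_def)
  then show ?thesis
    unfolding Pow_insert using assms(1) by (simp add: sum.union_disjoint sum.reindex)
qed

lemma fdelta_iter_std_basis:
  fixes f :: "('n \<Rightarrow> 'a::comm_ring_1) \<Rightarrow> 'a"
  assumes "distinct is"
  shows "fdelta_iter (map std_basis is) f y
     = (\<Sum>S\<in>Pow (set is). (-1) ^ (card (set is) - card S) * f (\<lambda>j. y j + of_bool (j \<in> S)))"
  using assms
proof (induction "is" arbitrary: y)
  case Nil
  then show ?case by simp
next
  case (Cons a as)
  define A where "A = set as"
  define g where "g y S = (-1) ^ (card A - card S) * f (\<lambda>j. y j + of_bool (j \<in> S))" for y and S :: "'n set"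
  have a: "a \<notin> A" and fin: "finite A" and IH: "\<And>y. fdelta_iter (map std_basis as) f y = (\<Sum>S\<in>Pow A. g y S)"
    using Cons by (auto simp: A_def g_def)
  have shift: "(-1) ^ (card (insert a A) - card (insert a S)) * f (\<lambda>j. y j + of_bool (j \<in> insert a S))
      = g (\<lambda>j. y j + std_basis a j) S" if "S \<in> Pow A" for S
  proof -
    have "a \<notin> S" "finite S" using that a fin finite_subset by auto
    moreover have "(\<lambda>j. y j + of_bool (j \<in> insert a S)) = (\<lambda>j. y j + std_basis a j + of_bool (j \<in> S))"
      using \<open>a \<notin> S\<close> by (auto simp: std_basis_def)
    ultimately show ?thesis using fin a by (simp add: g_def)
  qed
  have flip: "(-1) ^ (card (insert a A) - card S) * f (\<lambda>j. y j + of_bool (j \<in> S)) = - g y S"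
    if "S \<in> Pow A" for S
  proof -
    have "card S \<le> card A" using that fin by (simp add: card_mono)
    then have "card (insert a A) - card S = Suc (card A - card S)" using a fin by simp
    then show ?thesis by (simp add: g_def)
  qed
  have "fdelta_iter (map std_basis (a # as)) f y
      = (\<Sum>S\<in>Pow A. g (\<lambda>j. y j + std_basis a j) S) - (\<Sum>S\<in>Pow A. g y S)"
    by (simp add: fdelta_def IH)
  also have "\<dots> = (\<Sum>S\<in>Pow A. (-1) ^ (card (insert a A) - card S) * f (\<lambda>j. y j + of_bool (j \<in> S)))
      + (\<Sum>S\<in>Pow A. (-1) ^ (card (insert a A) - card (insert a S)) * f (\<lambda>j. y j + of_bool (j \<in> insert a S)))"
    using sum.cong[OF refl shift, of "Pow A"] sum.cong[OF refl flip, of "Pow A"]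
    by (simp only: sum_negf) simp
  also have "\<dots> = (\<Sum>S\<in>Pow (insert a A). (-1) ^ (card (insert a A) - card S) * f (\<lambda>j. y j + of_bool (j \<in> S)))"
    by (rule sum_Pow_insert[OF fin a, symmetric])
  finally show ?case by (simp add: A_def)
qed

definition cube_vertex :: "'n set \<Rightarrow> ('n \<Rightarrow> 'a::zero_neq_one) \<Rightarrow> 'n set \<Rightarrow> 'n \<Rightarrow> 'a" where
  "cube_vertex I x S = (\<lambda>j. if j \<in> I then of_bool (j \<in> S) else x j)"

definition cube_sum :: "(('n \<Rightarrow> 'a::comm_ring_1) \<Rightarrow> 'a) \<Rightarrow> 'n set \<Rightarrow> ('n \<Rightarrow> 'a) \<Rightarrow> 'a" where
  "cube_sum f I x = (\<Sum>S\<in>Pow I. (-1) ^ (card I - card S) * f (cube_vertex I x S))"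

lemma fdelta_iter_std_basis_eq_cube_sum:
  fixes f :: "('n \<Rightarrow> 'a::comm_ring_1) \<Rightarrow> 'a"
  assumes "distinct is"
  shows "fdelta_iter (map std_basis is) f (\<lambda>j. if j \<in> set is then 0 else x j) = cube_sum f (set is) x"
  unfolding fdelta_iter_std_basis[OF assms] cube_sum_def cube_vertex_def
  by (intro sum.cong refl arg_cong[where f = "\<lambda>v. _ * f v"] ext) auto

text \<open>f_I is the vertex sum: a 0/1 vector on I is the indicator of a subset of I,
  and its coordinate sum is the size of that subset.\<close>

lemma f_I_eq_cube_sum:
  fixes f :: "('n \<Rightarrow> 'a::comm_ring_1) \<Rightarrow> 'a"
  assumes "finite I"
  shows "f_I f I x = cube_sum f I x"
  unfolding f_I_def cube_sum_def
proof (rule sum.reindex_bij_witness[where j = "\<lambda>b. {i\<in>I. b i = 1}"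
      and i = "\<lambda>S. restrict (\<lambda>i. of_bool (i \<in> S)) I"])
  fix S assume "S \<in> Pow I"
  then show "{i \<in> I. restrict (\<lambda>i. of_bool (i \<in> S)) I i = (1::nat)} = S"
    and "restrict (\<lambda>i. of_bool (i \<in> S)) I \<in> I \<rightarrow>\<^sub>E {0, 1::nat}"
    by auto
next
  fix b :: "'n \<Rightarrow> nat" assume b: "b \<in> I \<rightarrow>\<^sub>E {0, 1}"
  define S where "S = {i\<in>I. b i = 1}"
  have S: "S \<subseteq> I" and bit: "\<And>i. i \<in> I \<Longrightarrow> b i = of_bool (i \<in> S)"
    using b by (auto simp: S_def)
  have "restrict (\<lambda>i. of_bool (i \<in> S)) I = b"
  proof
    fix i show "restrict (\<lambda>i. of_bool (i \<in> S)) I i = b i"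
      by (cases "i \<in> I") (simp_all add: bit PiE_arb[OF b])
  qed
  moreover have "(\<Sum>i\<in>I. b i) = card S"
    using assms S by (simp add: sum.cong[OF refl bit] Int_absorb1)
  moreover have "cube_vertex I x S = (\<lambda>j. if j \<in> I then of_nat (b j) else x j)"
    using bit by (auto simp: cube_vertex_def)
  ultimately show "restrict (\<lambda>i. of_bool (i \<in> {i\<in>I. b i = 1})) I = b"
    and "{i\<in>I. b i = 1} \<in> Pow I"
    and "(-1) ^ (card I - card {i\<in>I. b i = 1}) * f (cube_vertex I x {i\<in>I. b i = 1})
      = (-1) ^ (card I - (\<Sum>i\<in>I. b i)) * f (\<lambda>j. if j \<in> I then of_nat (b j) else x j)"
    using S unfolding S_def by simp_all
qed

text \<open>The alternating sum of a monomial over the vertices of the cube detects whether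
  every variable of I occurs in it (recall 0^0 = 1).\<close>

lemma alternating_sum_indicator_powers:
  assumes "finite I"
  shows "(\<Sum>S\<in>Pow I. (-1) ^ (card I - card S) * (\<Prod>i\<in>I. of_bool (i \<in> S) ^ e i))
       = (of_bool (\<forall>i\<in>I. 0 < e i) :: 'a::comm_ring_1)"
proof -
  have "(of_bool (\<forall>i\<in>I. 0 < e i) :: 'a) = (\<Prod>i\<in>I. 1 + - (0 ^ e i))"
    using assms by (induction I rule: finite_induct) (auto simp: power_0_left)
  also have "\<dots> = (\<Sum>S\<in>Pow I. (\<Prod>i\<in>S. 1) * (\<Prod>i\<in>I - S. - (0 ^ e i)))"
    by (rule prod_add[OF assms])
  also have "\<dots> = (\<Sum>S\<in>Pow I. (-1) ^ (card I - card S) * (\<Prod>i\<in>I. of_bool (i \<in> S) ^ e i))"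
  proof (rule sum.cong[OF refl])
    fix S assume "S \<in> Pow I"
    then have S: "S \<subseteq> I" by auto
    have "(\<Prod>i\<in>I. of_bool (i \<in> S) ^ e i :: 'a)
        = (\<Prod>i\<in>I - S. of_bool (i \<in> S) ^ e i) * (\<Prod>i\<in>S. of_bool (i \<in> S) ^ e i)"
      by (rule prod.subset_diff[OF S assms])
    also have "\<dots> = (\<Prod>i\<in>I - S. 0 ^ e i)" by simp
    finally show "(\<Prod>i\<in>S. 1) * (\<Prod>i\<in>I - S. - (0 ^ e i))
        = (-1) ^ (card I - card S) * (\<Prod>i\<in>I. of_bool (i \<in> S) ^ e i :: 'a)"
      using S assms by (simp add: prod_uminus card_Diff_subset finite_subset)
  qed
  finally show ?thesis by simp
qed

lemma monom_eval_cube_vertex: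
  "monom_eval e (cube_vertex I x S) = (\<Prod>i\<in>I. of_bool (i \<in> S) ^ e i) * (\<Prod>i\<in>-I. x i ^ e i)"
proof -
  have "monom_eval e (cube_vertex I x S) = (\<Prod>i\<in>UNIV. if i \<in> I then of_bool (i \<in> S) ^ e i else x i ^ e i)"
    unfolding monom_eval_def cube_vertex_def by (intro prod.cong) auto
  then show ?thesis
    by (simp add: prod.If_cases Compl_eq)
qed

lemma cube_sum_monom_eval:
  assumes "finite I"
  shows "cube_sum (monom_eval e) I x = of_bool (\<forall>i\<in>I. 0 < e i) * (\<Prod>i\<in>-I. x i ^ e i)"
  unfolding cube_sum_def monom_eval_cube_vertex
  by (simp add: mult.assoc sum_distrib_right alternating_sum_indicator_powers[OF assms, symmetric])

lemma cube_sum_linear: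
  "cube_sum (\<lambda>y. \<Sum>e\<in>R. c e * g e y) I x = (\<Sum>e\<in>R. c e * cube_sum (g e) I x)"
  unfolding cube_sum_def
  by (simp add: sum_distrib_left sum.swap[where A = "Pow I"] mult.left_commute)

lemma finite_red_exps: "finite (red_exps q :: ('n::finite \<Rightarrow> nat) set)"
proof (rule finite_subset)
  show "red_exps q \<subseteq> (UNIV :: 'n set) \<rightarrow>\<^sub>E {..q - 1}"
    by (auto simp: red_exps_def)
qed (simp add: finite_PiE)

lemma cube_sum_poly_fun:
  fixes c :: "('n::finite \<Rightarrow> nat) \<Rightarrow> 'a::{field,finite}"
  shows "cube_sum (poly_fun c) I x = fSI c I (\<lambda>j. if j \<in> I then 1 else x j)"
proof -
  define R where "R = (red_exps (card (UNIV :: 'a set)) :: ('n \<Rightarrow> nat) set)"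
  have "cube_sum (poly_fun c) I x = (\<Sum>e\<in>R. c e * (of_bool (\<forall>i\<in>I. 0 < e i) * (\<Prod>i\<in>-I. x i ^ e i)))"
    unfolding poly_fun_def[abs_def] R_def cube_sum_linear by (simp add: cube_sum_monom_eval)
  also have "\<dots> = (\<Sum>e\<in>{e\<in>R. \<forall>i\<in>I. 1 \<le> e i}. c e * (\<Prod>i\<in>-I. x i ^ e i))"
    unfolding sum.inter_filter[OF finite_red_exps] R_def
    by (intro sum.cong refl) (simp add: Suc_le_eq)
  also have "\<dots> = fSI c I (\<lambda>j. if j \<in> I then 1 else x j)"
  proof -
    have "(\<Prod>i\<in>UNIV. (if i \<in> I then 1 else x i) ^ (if i \<in> I then e i - 1 else e i))
        = (\<Prod>i\<in>-I. x i ^ e i)" for e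
      by (simp add: prod.If_cases Compl_eq if_distrib)
    then show ?thesis
      unfolding fSI_def R_def by simp
  qed
  finally show ?thesis .
qed

theorem mainTheorem3:
  fixes f :: "('n::finite \<Rightarrow> 'a::{field,finite}) \<Rightarrow> 'a"
    and c :: "('n \<Rightarrow> nat) \<Rightarrow> 'a"
    and "is" :: "'n list"
  assumes rep: "f = poly_fun c"
    and red: "\<And>e. e \<notin> red_exps (card (UNIV :: 'a set)) \<Longrightarrow> c e = 0"
    and dist: "distinct is"
  shows "\<forall>x. f_I f (set is) x
             = fdelta_iter (map std_basis is) f (\<lambda>j. if j \<in> set is then 0 else x j)
           \<and> f_I f (set is) x = fSI c (set is) (\<lambda>j. if j \<in> set is then 1 else x j)"
proof
  fix x :: "'n \<Rightarrow> 'a"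
  have vertex_sum: "f_I f (set is) x = cube_sum f (set is) x"
    by (rule f_I_eq_cube_sum) simp
  have difference: "fdelta_iter (map std_basis is) f (\<lambda>j. if j \<in> set is then 0 else x j)
      = cube_sum f (set is) x"
    by (rule fdelta_iter_std_basis_eq_cube_sum[OF dist])
  have quotient: "cube_sum f (set is) x = fSI c (set is) (\<lambda>j. if j \<in> set is then 1 else x j)"
    unfolding rep by (rule cube_sum_poly_fun)
  show "f_I f (set is) x
             = fdelta_iter (map std_basis is) f (\<lambda>j. if j \<in> set is then 0 else x j)
           \<and> f_I f (set is) x = fSI c (set is) (\<lambda>j. if j \<in> set is then 1 else x j)"
    using vertex_sum difference quotient by simp
qed

end
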